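(* There exist absolute constants $K,\kappa>0$ such that the following holds. Let $\tilde c>0$ and $\tilde\xi\ge1$. Suppose that, for all $N$, all $m\ge1$, and all $m$-tuples $p,q$ of distinct integers in $[1,2N]$ with $|p-q|_1\ge N/8$, $$\mathbb E\Big[\prod_{a=1}^m|R_{p_a,q_a}|\Big]\le\tilde c^m\exp\big(-|p-q|_1/\tilde\xi\big).$$ Then multi-point dynamical localization holds with constants $C=K\tilde c\tilde\xi^2$ and $\xi=\kappa\tilde\xi$. That is, for all sufficiently large $N$, all $m\ge1$ and all strictly increasing $m$-tuples $p,q$ in $[1,2N]$ with $|p-q|_1\ge N/8$, $$\mathbb E|\det R[p,q]|\le C^me^{-N/\xi}.$$
   Context: $R=R(t)\in SO(2N)$ is a random orthogonal matrix, namely the Heisenberg evolution matrix of the Majorana operators at a fixed time $t$: $e^{iHt}c_pe^{-iHt}=\sum_qR_{p,q}c_q$ for a random quadratic Hamiltonian $H$. For $m$-tuples $p,q$, $|p-q|_1=\sum_{a=1}^m|p_a-q_a|$. For strictly increasing $p,q$, $R[p,q]$ is the $m\times m$ matrix with entries $R[p,q]_{a,b}=R_{p_a,q_b}$. $\mathbb E$ is the expectation over the randomness. *)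

theory Defs
  imports "HOL-Analysis.Analysis" "HOL-Probability.Probability"
begin

text \<open>Matrices are functions nat \<Rightarrow> nat \<Rightarrow> real, indices 1..n.
  Leibniz determinant of the n x n matrix (A i j), 1 \<le> i,j \<le> n.\<close>
definition ldet :: "nat \<Rightarrow> (nat \<Rightarrow> nat \<Rightarrow> real) \<Rightarrow> real" where
  "ldet n A = (\<Sum>\<sigma> | \<sigma> permutes {1..n}. of_int (sign \<sigma>) * (\<Prod>i=1..n. A i (\<sigma> i)))"

definition in_SO :: "nat \<Rightarrow> (nat \<times> nat \<Rightarrow> real) \<Rightarrow> bool" where
  "in_SO n A \<longleftrightarrow>
     (\<forall>i\<in>{1..n}. \<forall>j\<in>{1..n}. (\<Sum>k=1..n. A (i,k) * A (j,k)) = (if i = j then 1 else 0))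
     \<and> ldet n (\<lambda>i j. A (i,j)) = 1"

definition mat_space :: "nat \<Rightarrow> (nat \<times> nat \<Rightarrow> real) measure" where
  "mat_space N = Pi\<^sub>M ({1..2*N} \<times> {1..2*N}) (\<lambda>_. borel)"

definition l1dist :: "nat \<Rightarrow> (nat \<Rightarrow> nat) \<Rightarrow> (nat \<Rightarrow> nat) \<Rightarrow> real" where
  "l1dist m p q = (\<Sum>a=1..m. \<bar>real (p a) - real (q a)\<bar>)"

end

theory Submission imports Defs begin

(* Expanding the determinant (Leibniz formula) bounds |det R[p,q]| by the sum over
   permutations sigma of the products prod_a |R(p_a, q_(sigma a))|.  For sorted p and q the
   rearrangement inequality |p - q|_1 <= |p - q o sigma|_1 shows that every permuted tuple
   still satisfies the distance hypothesis, so each term has expectation at most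
   c^m exp(-|p - q o sigma|_1 / xi).  Splitting this exponential in two halves, one half is
   at most exp(-N/(16 xi)) while the other factorises over a; the sum over permutations of
   the factorised halves is dominated by the product of the row sums of the kernel
   exp(-|x - y|/(2 xi)), each of which is at most 6 xi.  Hence the theorem holds with
   K = 6 and kappa = 16. *)

(* A sum over permutations of products of nonnegative weights is dominated by the sum over
   all maps S -> S, which factorises as the product of the row sums. *)
lemma sum_permutes_prod_le_prod_sum:
  fixes w :: "'a \<Rightarrow> 'a \<Rightarrow> real"
  assumes S: "finite S" and w: "\<And>a b. 0 \<le> w a b"
  shows "(\<Sum>\<sigma> | \<sigma> permutes S. \<Prod>a\<in>S. w a (\<sigma> a)) \<le> (\<Prod>a\<in>S. \<Sum>b\<in>S. w a b)"
proof -
  let ?restr = "\<lambda>\<sigma>. restrict \<sigma> S"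
  have inj: "inj_on ?restr {\<sigma>. \<sigma> permutes S}"
  proof (rule inj_onI, rule ext)
    fix x y z assume "x \<in> {\<sigma>. \<sigma> permutes S}" "y \<in> {\<sigma>. \<sigma> permutes S}" "?restr x = ?restr y"
    then show "x z = y z"
      by (cases "z \<in> S") (metis restrict_apply', simp add: permutes_not_in)
  qed
  have "(\<Sum>\<sigma> | \<sigma> permutes S. \<Prod>a\<in>S. w a (\<sigma> a))
      = (\<Sum>g\<in>?restr ` {\<sigma>. \<sigma> permutes S}. \<Prod>a\<in>S. w a (g a))"
    by (subst sum.reindex[OF inj]) (auto intro!: sum.cong prod.cong)
  also have "\<dots> \<le> (\<Sum>g\<in>PiE S (\<lambda>_. S). \<Prod>a\<in>S. w a (g a))"
    using S by (intro sum_mono2) (auto simp: finite_PiE permutes_in_image intro!: prod_nonneg w)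
  also have "\<dots> = (\<Prod>a\<in>S. \<Sum>b\<in>S. w a b)"
    by (rule prod_sum_PiE[symmetric]) (use S in auto)
  finally show ?thesis .
qed

lemma abs_ldet_le_sum_permutes:
  "\<bar>ldet n A\<bar> \<le> (\<Sum>\<sigma> | \<sigma> permutes {1..n}. \<Prod>i=1..n. \<bar>A i (\<sigma> i)\<bar>)"
proof -
  have "\<bar>ldet n A\<bar> \<le> (\<Sum>\<sigma> | \<sigma> permutes {1..n}. \<bar>of_int (sign \<sigma>) * (\<Prod>i=1..n. A i (\<sigma> i))\<bar>)"
    unfolding ldet_def by (rule sum_abs)
  also have "\<dots> = (\<Sum>\<sigma> | \<sigma> permutes {1..n}. \<Prod>i=1..n. \<bar>A i (\<sigma> i)\<bar>)"
    by (intro sum.cong refl) (simp add: abs_mult abs_prod sign_def)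
  finally show ?thesis .
qed

lemma abs_diff_eq_threshold_count:
  fixes x y B :: nat
  assumes "x \<in> {1..B}" "y \<in> {1..B}"
  shows "\<bar>real x - real y\<bar> = (\<Sum>t\<in>{1..B}. \<bar>(of_bool (x \<le> t)::real) - of_bool (y \<le> t)\<bar>)"
proof -
  have ordered: "\<bar>real x - real y\<bar> = (\<Sum>t\<in>{1..B}. \<bar>(of_bool (x \<le> t)::real) - of_bool (y \<le> t)\<bar>)"
    if "x \<le> y" "x \<in> {1..B}" "y \<in> {1..B}" for x y
  proof -
    have "(\<Sum>t\<in>{1..B}. \<bar>(of_bool (x \<le> t)::real) - of_bool (y \<le> t)\<bar>)
        = (\<Sum>t\<in>{1..B}. if t \<in> {x..<y} then 1 else 0)"
      using that(1) by (intro sum.cong) auto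
    also have "\<dots> = (\<Sum>t\<in>{t\<in>{1..B}. t \<in> {x..<y}}. 1)"
      by (rule sum.inter_filter[symmetric]) simp
    also have "{t\<in>{1..B}. t \<in> {x..<y}} = {x..<y}" using that by auto
    finally show ?thesis using that by simp
  qed
  show ?thesis
    using ordered[of x y] ordered[of y x] assms by (cases "x \<le> y") (auto simp: abs_minus_commute)
qed

(* For increasing tuples the sets {a. p a \<le> t} and {a. q a \<le> t} are nested initial
   segments, so the threshold-wise discrepancies do not cancel. *)
lemma sum_abs_thresholds_sorted:
  fixes p q :: "nat \<Rightarrow> nat"
  assumes p: "strict_mono_on {1..m} p" and q: "strict_mono_on {1..m} q"
  shows "(\<Sum>a\<in>{1..m}. \<bar>(of_bool (p a \<le> t)::real) - of_bool (q a \<le> t)\<bar>) =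
     \<bar>(\<Sum>a\<in>{1..m}. (of_bool (p a \<le> t)::real)) - (\<Sum>a\<in>{1..m}. of_bool (q a \<le> t))\<bar>"
proof -
  have mono: "f b \<le> f a" if "strict_mono_on {1..m} f" "a \<in> {1..m}" "b \<in> {1..m}" "b \<le> a"
    for f :: "nat \<Rightarrow> nat" and a b
    using that strict_mono_onD[of "{1..m}" f b a] by (cases "b = a") auto
  have nested: "(\<forall>a\<in>{1..m}. q a \<le> t \<longrightarrow> p a \<le> t) \<or> (\<forall>a\<in>{1..m}. p a \<le> t \<longrightarrow> q a \<le> t)"
  proof (rule ccontr)
    assume "\<not> ?thesis"
    then obtain a b where "a \<in> {1..m}" "q a \<le> t" "\<not> p a \<le> t" "b \<in> {1..m}" "p b \<le> t" "\<not> q b \<le> t"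
      by blast
    then show False
      using mono[OF p, of b a] mono[OF q, of a b] by (cases "a \<le> b") auto
  qed
  show ?thesis
    using nested
  proof
    assume h: "\<forall>a\<in>{1..m}. q a \<le> t \<longrightarrow> p a \<le> t"
    have "(\<Sum>a\<in>{1..m}. \<bar>(of_bool (p a \<le> t)::real) - of_bool (q a \<le> t)\<bar>)
        = (\<Sum>a\<in>{1..m}. (of_bool (p a \<le> t)::real) - of_bool (q a \<le> t))"
      and "0 \<le> (\<Sum>a\<in>{1..m}. (of_bool (p a \<le> t)::real) - of_bool (q a \<le> t))"
      using h by (auto intro!: sum.cong sum_nonneg)
    then show ?thesis by (simp add: sum_subtractf)
  next
    assume h: "\<forall>a\<in>{1..m}. p a \<le> t \<longrightarrow> q a \<le> t"
    have "(\<Sum>a\<in>{1..m}. \<bar>(of_bool (p a \<le> t)::real) - of_bool (q a \<le> t)\<bar>)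
        = (\<Sum>a\<in>{1..m}. (of_bool (q a \<le> t)::real) - of_bool (p a \<le> t))"
      and "0 \<le> (\<Sum>a\<in>{1..m}. (of_bool (q a \<le> t)::real) - of_bool (p a \<le> t))"
      using h by (auto intro!: sum.cong sum_nonneg)
    then show ?thesis by (simp add: sum_subtractf)
  qed
qed

lemma l1dist_le_permuted:
  fixes p q :: "nat \<Rightarrow> nat"
  assumes p: "strict_mono_on {1..m} p" and q: "strict_mono_on {1..m} q"
    and \<sigma>: "\<sigma> permutes {1..m}"
    and rng: "\<forall>a\<in>{1..m}. p a \<in> {1..B} \<and> q a \<in> {1..B}"
  shows "l1dist m p q \<le> l1dist m p (q \<circ> \<sigma>)"
proof -
  let ?I = "\<lambda>x t. (of_bool (x \<le> t)::real)"
  have \<sigma>_in: "\<sigma> a \<in> {1..m}" if "a \<in> {1..m}" for a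
    using permutes_in_image[OF \<sigma>] that by auto
  have "l1dist m p q = (\<Sum>a\<in>{1..m}. \<Sum>t\<in>{1..B}. \<bar>?I (p a) t - ?I (q a) t\<bar>)"
    unfolding l1dist_def using rng by (intro sum.cong refl abs_diff_eq_threshold_count) auto
  also have "\<dots> = (\<Sum>t\<in>{1..B}. \<bar>(\<Sum>a\<in>{1..m}. ?I (p a) t) - (\<Sum>a\<in>{1..m}. ?I (q a) t)\<bar>)"
    by (subst sum.swap) (intro sum.cong refl sum_abs_thresholds_sorted p q)
  also have "\<dots> = (\<Sum>t\<in>{1..B}. \<bar>\<Sum>a\<in>{1..m}. ?I (p a) t - ?I (q (\<sigma> a)) t\<bar>)"
    using sum.permute[OF \<sigma>, of "\<lambda>a. ?I (q a) _"] by (simp add: comp_def sum_subtractf)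
  also have "\<dots> \<le> (\<Sum>t\<in>{1..B}. \<Sum>a\<in>{1..m}. \<bar>?I (p a) t - ?I (q (\<sigma> a)) t\<bar>)"
    by (intro sum_mono sum_abs)
  also have "\<dots> = l1dist m p (q \<circ> \<sigma>)"
    unfolding l1dist_def comp_def using rng \<sigma>_in
    by (subst sum.swap) (intro sum.cong refl abs_diff_eq_threshold_count[symmetric], auto)
  finally show ?thesis .
qed

lemma sum_distinct_powers_le:
  fixes r :: real and g :: "'a \<Rightarrow> nat"
  assumes "finite Q" "inj_on g Q" "0 \<le> r" "r < 1"
  shows "(\<Sum>y\<in>Q. r ^ g y) \<le> 1 / (1 - r)"
proof -
  have "(\<Sum>y\<in>Q. r ^ g y) = (\<Sum>k\<in>g ` Q. r ^ k)"
    using assms by (simp add: sum.reindex)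
  also have "\<dots> \<le> (\<Sum>k. r ^ k)"
    by (rule sum_le_suminf) (use assms in \<open>auto intro!: summable_geometric\<close>)
  also have "\<dots> = 1 / (1 - r)" using assms by (intro suminf_geometric) auto
  finally show ?thesis .
qed

(* The kernel exp(-|x - y|/(2 xi)) has row sums at most 2(1 + 2 xi) \<le> 6 xi: the points
   y \<ge> x and y < x each contribute at most a geometric series with ratio exp(-1/(2 xi)). *)
lemma exp_kernel_row_sum_le:
  fixes x :: nat and Q :: "nat set" and \<xi> :: real
  assumes Q: "finite Q" and \<xi>: "\<xi> \<ge> 1"
  shows "(\<Sum>y\<in>Q. exp (- \<bar>real x - real y\<bar> / (2*\<xi>))) \<le> 6 * \<xi>"
proof -
  define u where "u = 1 / (2*\<xi>)"
  define r where "r = exp (- u)"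
  have u: "u > 0" using \<xi> by (simp add: u_def)
  have r: "0 \<le> r" "r < 1" using u by (auto simp: r_def)
  have kernel_power: "exp (- \<bar>real x - real y\<bar> / (2*\<xi>)) = r ^ nat \<bar>int x - int y\<bar>" for y
  proof -
    have "- \<bar>real x - real y\<bar> / (2*\<xi>) = real (nat \<bar>int x - int y\<bar>) * (- u)"
      by (simp add: u_def)
    then show ?thesis by (metis r_def exp_of_nat_mult)
  qed
  have geometric: "1 / (1 - r) \<le> 1 + 2*\<xi>"
  proof -
    have "r \<le> 1 / (1 + u)"
      using u exp_ge_add_one_self[of u] by (simp add: r_def exp_minus field_simps)
    then have "u / (1 + u) \<le> 1 - r" using u by (simp add: field_simps)
    then have "1 / (1 - r) \<le> (1 + u) / u"
      using u r by (simp add: field_simps)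
    also have "(1 + u) / u = 1 + 2*\<xi>" using \<xi> by (simp add: u_def field_simps)
    finally show ?thesis .
  qed
  have half: "(\<Sum>y\<in>A. r ^ nat \<bar>int x - int y\<bar>) \<le> 1 / (1 - r)"
    if "A \<subseteq> Q" "inj_on (\<lambda>y. nat \<bar>int x - int y\<bar>) A" for A
    using that Q r finite_subset by (intro sum_distinct_powers_le) auto
  have "(\<Sum>y\<in>Q. exp (- \<bar>real x - real y\<bar> / (2*\<xi>)))
      = (\<Sum>y\<in>Q \<inter> {y. x \<le> y}. r ^ nat \<bar>int x - int y\<bar>)
        + (\<Sum>y\<in>Q - {y. x \<le> y}. r ^ nat \<bar>int x - int y\<bar>)"
    unfolding kernel_power using Q by (rule sum.Int_Diff)
  also have "\<dots> \<le> 1 / (1 - r) + 1 / (1 - r)"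
    by (intro add_mono half) (auto simp: inj_on_def)
  finally show ?thesis using geometric \<xi> by linarith
qed

lemma exp_l1dist_half_split:
  fixes \<xi> D :: real
  assumes \<xi>: "\<xi> > 0" and D: "D \<le> l1dist m p r"
  shows "exp (- l1dist m p r / \<xi>)
    \<le> exp (- D / (2*\<xi>)) * (\<Prod>a\<in>{1..m}. exp (- \<bar>real (p a) - real (r a)\<bar> / (2*\<xi>)))"
proof -
  let ?d = "l1dist m p r"
  have factorise: "exp (- ?d / (2*\<xi>)) = (\<Prod>a\<in>{1..m}. exp (- \<bar>real (p a) - real (r a)\<bar> / (2*\<xi>)))"
    unfolding l1dist_def by (simp add: exp_sum[symmetric] sum_negf sum_divide_distrib)
  have "exp (- ?d / \<xi>) = exp (- ?d / (2*\<xi>)) * exp (- ?d / (2*\<xi>))"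
    by (simp add: exp_add[symmetric])
  also have "\<dots> \<le> exp (- D / (2*\<xi>)) * exp (- ?d / (2*\<xi>))"
    using D \<xi> by (intro mult_right_mono) (auto simp: field_simps)
  finally show ?thesis by (simp only: factorise)
qed

lemma sum_permutes_exp_l1dist_le:
  fixes c \<xi> D :: real and p q :: "nat \<Rightarrow> nat"
  assumes c: "c \<ge> 0" and \<xi>: "\<xi> \<ge> 1"
    and p: "strict_mono_on {1..m} p" and q: "strict_mono_on {1..m} q"
    and rng: "\<forall>a\<in>{1..m}. p a \<in> {1..B} \<and> q a \<in> {1..B}"
    and D: "D \<le> l1dist m p q"
  shows "(\<Sum>\<sigma> | \<sigma> permutes {1..m}. c ^ m * exp (- l1dist m p (q \<circ> \<sigma>) / \<xi>))
    \<le> (6 * c * \<xi>) ^ m * exp (- D / (2*\<xi>))"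
proof -
  let ?S = "{1..m}"
  let ?k = "\<lambda>a b. exp (- \<bar>real (p a) - real (q b)\<bar> / (2*\<xi>))"
  have "(\<Sum>\<sigma> | \<sigma> permutes ?S. c ^ m * exp (- l1dist m p (q \<circ> \<sigma>) / \<xi>))
      \<le> (\<Sum>\<sigma> | \<sigma> permutes ?S. c ^ m * (exp (- D / (2*\<xi>)) * (\<Prod>a\<in>?S. ?k a (\<sigma> a))))"
  proof (intro sum_mono mult_left_mono c zero_le_power)
    fix \<sigma> assume "\<sigma> \<in> {\<sigma>. \<sigma> permutes ?S}"
    then have "D \<le> l1dist m p (q \<circ> \<sigma>)"
      using D l1dist_le_permuted[OF p q _ rng] by force
    then show "exp (- l1dist m p (q \<circ> \<sigma>) / \<xi>) \<le> exp (- D / (2*\<xi>)) * (\<Prod>a\<in>?S. ?k a (\<sigma> a))"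
      using exp_l1dist_half_split[of \<xi> D m p "q \<circ> \<sigma>"] \<xi> by simp
  qed
  also have "\<dots> = c ^ m * exp (- D / (2*\<xi>)) * (\<Sum>\<sigma> | \<sigma> permutes ?S. \<Prod>a\<in>?S. ?k a (\<sigma> a))"
    by (simp add: sum_distrib_left mult.assoc)
  also have "\<dots> \<le> c ^ m * exp (- D / (2*\<xi>)) * (\<Prod>a\<in>?S. \<Sum>b\<in>?S. ?k a b)"
    using c by (intro mult_left_mono sum_permutes_prod_le_prod_sum) auto
  also have "\<dots> \<le> c ^ m * exp (- D / (2*\<xi>)) * (\<Prod>a\<in>?S. 6 * \<xi>)"
  proof (intro mult_left_mono prod_mono conjI)
    fix a
    have "(\<Sum>b\<in>?S. ?k a b) = (\<Sum>y\<in>q ` ?S. exp (- \<bar>real (p a) - real y\<bar> / (2*\<xi>)))"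
      using strict_mono_on_imp_inj_on[OF q] by (simp add: sum.reindex)
    also have "\<dots> \<le> 6 * \<xi>" using \<xi> by (intro exp_kernel_row_sum_le) auto
    finally show "(\<Sum>b\<in>?S. ?k a b) \<le> 6 * \<xi>" .
  qed (use c in \<open>auto intro: sum_nonneg\<close>)
  also have "\<dots> = (6 * c * \<xi>) ^ m * exp (- D / (2*\<xi>))"
    by (simp add: power_mult_distrib)
  finally show ?thesis .
qed

lemma mat_entry_measurable:
  assumes "sets M = sets (mat_space N)" and "i \<in> {1..2*N}" "j \<in> {1..2*N}"
  shows "(\<lambda>R. R (i,j)) \<in> borel_measurable M"
proof -
  have "(\<lambda>R. R (i,j)) \<in> borel_measurable (mat_space N)"
    unfolding mat_space_def using assms(2,3) by (intro measurable_component_singleton) auto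
  then show ?thesis using measurable_cong_sets[OF assms(1) refl] by blast
qed

(* Rows of an orthogonal matrix are unit vectors, so all entries lie in [-1,1]. *)
lemma in_SO_entry_bound:
  assumes R: "in_SO n R" and i: "i \<in> {1..n}" and j: "j \<in> {1..n}"
  shows "\<bar>R (i,j)\<bar> \<le> 1"
proof -
  have "(R (i,j))\<^sup>2 \<le> (\<Sum>k=1..n. R (i,k) * R (i,k))"
    unfolding power2_eq_square using j by (intro member_le_sum) auto
  also have "\<dots> = 1" using R i unfolding in_SO_def by auto
  finally show ?thesis by (simp add: abs_square_le_1)
qed

(* E |det R[p,q]| is at most the sum over permutations sigma of E prod_a |R(p_a, q_(sigma a))|.
   Integrability comes from the entry bound for orthogonal matrices. *)
lemma integral_abs_ldet_le_sum_permutes: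
  assumes M: "prob_space M" and sets: "sets M = sets (mat_space N)"
    and SO: "AE R in M. in_SO (2*N) R"
    and rng: "\<forall>a\<in>{1..m}. p a \<in> {1..2*N} \<and> q a \<in> {1..2*N}"
  shows "(\<integral>R. \<bar>ldet m (\<lambda>a b. R (p a, q b))\<bar> \<partial>M)
    \<le> (\<Sum>\<sigma> | \<sigma> permutes {1..m}. \<integral>R. (\<Prod>a=1..m. \<bar>R (p a, q (\<sigma> a))\<bar>) \<partial>M)"
proof -
  interpret prob_space M by (rule M)
  let ?P = "{\<sigma>. \<sigma> permutes {1..m}}"
  define f where "f \<sigma> R = (\<Prod>a=1..m. \<bar>R (p a, q (\<sigma> a))\<bar>)" for \<sigma> and R :: "nat \<times> nat \<Rightarrow> real"
  have \<sigma>_rng: "p a \<in> {1..2*N}" "q (\<sigma> a) \<in> {1..2*N}" if "\<sigma> \<in> ?P" "a \<in> {1..m}" for \<sigma> a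
    using rng permutes_in_image[of \<sigma> "{1..m}" a] that by auto
  have entry: "(\<lambda>R. R (p a, q (\<sigma> a))) \<in> borel_measurable M" if "\<sigma> \<in> ?P" "a \<in> {1..m}" for \<sigma> a
    using mat_entry_measurable[OF sets] \<sigma>_rng[OF that] by blast
  have int_f: "integrable M (f \<sigma>)" if \<sigma>: "\<sigma> \<in> ?P" for \<sigma>
  proof (rule integrable_const_bound[where B=1])
    show "AE R in M. norm (f \<sigma> R) \<le> 1"
      using SO
    proof eventually_elim
      case (elim R)
      then have "f \<sigma> R \<le> 1"
        unfolding f_def using \<sigma>_rng[OF \<sigma>] by (intro prod_le_1) (auto intro: in_SO_entry_bound)
      then show ?case by (simp add: f_def prod_nonneg)
    qed
    show "f \<sigma> \<in> borel_measurable M"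
      unfolding f_def using entry[OF \<sigma>] by measurable
  qed
  let ?D = "\<lambda>R. \<bar>ldet m (\<lambda>a b. R (p a, q b))\<bar>"
  have meas_D: "?D \<in> borel_measurable M"
    unfolding ldet_def using entry by measurable
  have int_sum: "integrable M (\<lambda>R. \<Sum>\<sigma>\<in>?P. f \<sigma> R)" using int_f by auto
  have pointwise: "?D R \<le> (\<Sum>\<sigma>\<in>?P. f \<sigma> R)" for R
    unfolding f_def by (rule abs_ldet_le_sum_permutes)
  have int_D: "integrable M ?D"
    using order_trans[OF pointwise abs_ge_self]
    by (intro Bochner_Integration.integrable_bound[OF int_sum meas_D]) auto
  have "(\<integral>R. ?D R \<partial>M) \<le> (\<integral>R. (\<Sum>\<sigma>\<in>?P. f \<sigma> R) \<partial>M)"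
    by (rule integral_mono[OF int_D int_sum pointwise])
  also have "\<dots> = (\<Sum>\<sigma>\<in>?P. \<integral>R. f \<sigma> R \<partial>M)"
    using int_f by (intro Bochner_Integration.integral_sum) auto
  finally show ?thesis unfolding f_def .
qed

theorem mainTheorem11:
  shows "\<exists>K \<kappa> :: real. K > 0 \<and> \<kappa> > 0 \<and>
    (\<forall>(M :: nat \<Rightarrow> (nat \<times> nat \<Rightarrow> real) measure) (c :: real) (\<xi> :: real).
      c > 0 \<longrightarrow> \<xi> \<ge> 1 \<longrightarrow>
      (\<forall>N. prob_space (M N) \<and> sets (M N) = sets (mat_space N)
            \<and> (AE R in M N. in_SO (2*N) R)) \<longrightarrow>
      (\<forall>N m (p :: nat \<Rightarrow> nat) (q :: nat \<Rightarrow> nat). m \<ge> 1 \<longrightarrow>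
          (\<forall>a\<in>{1..m}. p a \<in> {1..2*N} \<and> q a \<in> {1..2*N}) \<longrightarrow>
          inj_on p {1..m} \<longrightarrow> inj_on q {1..m} \<longrightarrow>
          l1dist m p q \<ge> real N / 8 \<longrightarrow>
          (\<integral>R. (\<Prod>a=1..m. \<bar>R (p a, q a)\<bar>) \<partial>M N) \<le> c ^ m * exp (- l1dist m p q / \<xi>)) \<longrightarrow>
      (\<exists>N0. \<forall>N \<ge> N0. \<forall>m (p :: nat \<Rightarrow> nat) (q :: nat \<Rightarrow> nat). m \<ge> 1 \<longrightarrow>
          (\<forall>a\<in>{1..m}. p a \<in> {1..2*N} \<and> q a \<in> {1..2*N}) \<longrightarrow>
          strict_mono_on {1..m} p \<longrightarrow> strict_mono_on {1..m} q \<longrightarrow>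
          l1dist m p q \<ge> real N / 8 \<longrightarrow>
          (\<integral>R. \<bar>ldet m (\<lambda>a b. R (p a, q b))\<bar> \<partial>M N)
            \<le> (K * c * \<xi>\<^sup>2) ^ m * exp (- real N / (\<kappa> * \<xi>))))"
proof (rule exI[of _ "6::real"], rule exI[of _ "16::real"], intro conjI allI impI)
  fix M :: "nat \<Rightarrow> (nat \<times> nat \<Rightarrow> real) measure" and c \<xi> :: real
  assume c: "c > 0" and \<xi>: "\<xi> \<ge> 1"
    and M: "\<forall>N. prob_space (M N) \<and> sets (M N) = sets (mat_space N) \<and> (AE R in M N. in_SO (2*N) R)"
    and decay: "\<forall>N m (p :: nat \<Rightarrow> nat) (q :: nat \<Rightarrow> nat). m \<ge> 1 \<longrightarrow>
          (\<forall>a\<in>{1..m}. p a \<in> {1..2*N} \<and> q a \<in> {1..2*N}) \<longrightarrow>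
          inj_on p {1..m} \<longrightarrow> inj_on q {1..m} \<longrightarrow>
          l1dist m p q \<ge> real N / 8 \<longrightarrow>
          (\<integral>R. (\<Prod>a=1..m. \<bar>R (p a, q a)\<bar>) \<partial>M N) \<le> c ^ m * exp (- l1dist m p q / \<xi>)"
  show "\<exists>N0. \<forall>N \<ge> N0. \<forall>m (p :: nat \<Rightarrow> nat) (q :: nat \<Rightarrow> nat). m \<ge> 1 \<longrightarrow>
          (\<forall>a\<in>{1..m}. p a \<in> {1..2*N} \<and> q a \<in> {1..2*N}) \<longrightarrow>
          strict_mono_on {1..m} p \<longrightarrow> strict_mono_on {1..m} q \<longrightarrow>
          l1dist m p q \<ge> real N / 8 \<longrightarrow>
          (\<integral>R. \<bar>ldet m (\<lambda>a b. R (p a, q b))\<bar> \<partial>M N)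
            \<le> (6 * c * \<xi>\<^sup>2) ^ m * exp (- real N / (16 * \<xi>))"
  proof (intro exI[of _ 0] allI impI)
    fix N m :: nat and p q :: "nat \<Rightarrow> nat"
    assume m: "m \<ge> 1" and rng: "\<forall>a\<in>{1..m}. p a \<in> {1..2*N} \<and> q a \<in> {1..2*N}"
      and p: "strict_mono_on {1..m} p" and q: "strict_mono_on {1..m} q"
      and dist: "l1dist m p q \<ge> real N / 8"
    (* Every matching q \<circ> sigma is again injective and, by the rearrangement inequality,
       at l1 distance \<ge> N/8 from p, so the decay hypothesis bounds each Leibniz term. *)
    have term_bound: "(\<integral>R. (\<Prod>a=1..m. \<bar>R (p a, q (\<sigma> a))\<bar>) \<partial>M N) \<le> c ^ m * exp (- l1dist m p (q \<circ> \<sigma>) / \<xi>)"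
      if \<sigma>: "\<sigma> permutes {1..m}" for \<sigma>
    proof -
      have "inj_on (q \<circ> \<sigma>) {1..m}"
        using strict_mono_on_imp_inj_on[OF q] \<sigma> by (simp add: comp_inj_on permutes_image permutes_inj_on)
      moreover have "\<forall>a\<in>{1..m}. p a \<in> {1..2*N} \<and> (q \<circ> \<sigma>) a \<in> {1..2*N}"
        using rng permutes_in_image[OF \<sigma>] by auto
      moreover have "l1dist m p (q \<circ> \<sigma>) \<ge> real N / 8"
        using dist l1dist_le_permuted[OF p q \<sigma> rng] by linarith
      ultimately show ?thesis
        using decay m strict_mono_on_imp_inj_on[OF p] by (simp add: comp_def)
    qed
    have "(\<integral>R. \<bar>ldet m (\<lambda>a b. R (p a, q b))\<bar> \<partial>M N)
        \<le> (\<Sum>\<sigma> | \<sigma> permutes {1..m}. \<integral>R. (\<Prod>a=1..m. \<bar>R (p a, q (\<sigma> a))\<bar>) \<partial>M N)"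
      using M rng by (intro integral_abs_ldet_le_sum_permutes) auto
    also have "\<dots> \<le> (\<Sum>\<sigma> | \<sigma> permutes {1..m}. c ^ m * exp (- l1dist m p (q \<circ> \<sigma>) / \<xi>))"
      using term_bound by (intro sum_mono) auto
    also have "\<dots> \<le> (6 * c * \<xi>) ^ m * exp (- (real N / 8) / (2*\<xi>))"
      using c \<xi> p q rng dist by (intro sum_permutes_exp_l1dist_le) auto
    also have "\<dots> \<le> (6 * c * \<xi>\<^sup>2) ^ m * exp (- real N / (16 * \<xi>))"
      using c \<xi> by (intro mult_mono power_mono) (auto simp: power2_eq_square)
    finally show "(\<integral>R. \<bar>ldet m (\<lambda>a b. R (p a, q b))\<bar> \<partial>M N)
        \<le> (6 * c * \<xi>\<^sup>2) ^ m * exp (- real N / (16 * \<xi>))" .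
  qed
qed simp_all

end
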